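(* Let $d\ge1$, let $X$ be a lazy simple random walk on $\mathbb{Z}^d$ started at $0$, and let $(D_s)_{s\ge0}$ be subsets of $\mathbb{Z}^d$ symmetric about the origin, i.e. $D_s=-D_s$ for all $s$. If $\sigma$ is a reflection of $\mathbb{Z}^d$ (with specified half-spaces $H^+,H^-$), then for all $t\ge0$, \[ \mathbb{E}\Big[\mathrm{vol}\Big(\bigcup_{s=0}^t(X_s+D_s)\Big)\Big]\ \ge\ \mathbb{E}\Big[\mathrm{vol}\Big(\bigcup_{s=0}^t(X_s+D_s^\sigma)\Big)\Big]. \]
   Context: $\mathbb{Z}^d$ carries the nearest-neighbour graph ($\ell^1$) distance. A reflection of a metric space $(M,d)$ is an isometry $\sigma:M\to M$ together with a decomposition $M=H^0\sqcup H^+\sqcup H^-$ such that $\sigma^2x=x$ for all $x$, $H^0$ is the set of fixed points of $\sigma$, $\sigma H^+=H^-$, and $d(x,y)<d(x,\sigma y)$ for all $x,y\in H^+$. The two-point rearrangement $A^\sigma$ of $A\subseteq M$ is defined by $A^\sigma\cap H^+=(A\cup\sigma A)\cap H^+$, $A^\sigma\cap H^-=(A\cap\sigma A)\cap H^-$, $A^\sigma\cap H^0=A\cap H^0$. The lazy simple random walk stays put with probability $1/2$ and otherwise moves from $x$ to $x\pm e_i$, each with probability $1/(4d)$. $\mathrm{vol}(S)$ is the cardinality of $S$ and $x+S=\{x+y:y\in S\}$. *)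

theory Defs
  imports "HOL-Probability.Probability"
begin

text \<open>The lattice Z^d is modelled as int ^ 'd for a finite index type 'd (d = CARD('d) \<ge> 1).\<close>

definition l1dist :: "int ^ 'd::finite \<Rightarrow> int ^ 'd \<Rightarrow> int" where
  "l1dist x y = (\<Sum>i\<in>UNIV. \<bar>x $ i - y $ i\<bar>)"

definition is_reflection ::
  "(int ^ 'd::finite \<Rightarrow> int ^ 'd) \<Rightarrow> (int ^ 'd) set \<Rightarrow> (int ^ 'd) set \<Rightarrow> (int ^ 'd) set \<Rightarrow> bool" where
  "is_reflection \<sigma> H0 Hp Hm \<longleftrightarrow>
     (\<forall>x y. l1dist (\<sigma> x) (\<sigma> y) = l1dist x y) \<and>
     (\<forall>x. \<sigma> (\<sigma> x) = x) \<and>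
     H0 \<union> Hp \<union> Hm = UNIV \<and> H0 \<inter> Hp = {} \<and> H0 \<inter> Hm = {} \<and> Hp \<inter> Hm = {} \<and>
     H0 = {x. \<sigma> x = x} \<and>
     \<sigma> ` Hp = Hm \<and>
     (\<forall>x\<in>Hp. \<forall>y\<in>Hp. l1dist x y < l1dist x (\<sigma> y))"

definition two_point ::
  "(int ^ 'd::finite \<Rightarrow> int ^ 'd) \<Rightarrow> (int ^ 'd) set \<Rightarrow> (int ^ 'd) set \<Rightarrow> (int ^ 'd) set \<Rightarrow> (int ^ 'd) set \<Rightarrow> (int ^ 'd) set" where
  "two_point \<sigma> H0 Hp Hm A =
     ((A \<union> \<sigma> ` A) \<inter> Hp) \<union> ((A \<inter> \<sigma> ` A) \<inter> Hm) \<union> (A \<inter> H0)"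

definition vol :: "'a set \<Rightarrow> ennreal" where
  "vol S = emeasure (count_space UNIV) S"

definition lazy_step :: "(int ^ 'd::finite) pmf" where
  "lazy_step = do {
     b \<leftarrow> bernoulli_pmf (1/2);
     if b then return_pmf 0 else do {
       i \<leftarrow> pmf_of_set (UNIV :: 'd set);
       sg \<leftarrow> pmf_of_set {1, -1 :: int};
       return_pmf (\<chi> j. if j = i then sg else 0)
     }
   }"

text \<open>Law of the path (X_0, ..., X_n) of the lazy SRW started at 0
  (values at times > n are 0 and irrelevant).\<close>
primrec lazy_walk :: "nat \<Rightarrow> (nat \<Rightarrow> int ^ 'd::finite) pmf" where
  "lazy_walk 0 = return_pmf (\<lambda>_. 0)"
| "lazy_walk (Suc n) = do {
     X \<leftarrow> lazy_walk n;
     y \<leftarrow> lazy_step;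
     return_pmf (X (Suc n := X n + y))
   }"

end

theory Submission
  imports Defs
begin

text \<open>Writing \<open>vol\<close> as a sum over \<open>z\<close>, the claim compares the probabilities that \<open>z\<close> is
  not covered, \<open>E \<Prod>\<^sub>s 1[z - X\<^sub>s \<notin> D\<^sub>s]\<close>. Such an expectation is evaluated backwards in time:
  each step applies the transition operator of the walk and multiplies by the next indicator.
  The kernel of that operator is a nonincreasing function of the \<open>\<ell>\<^sup>1\<close> distance and is
  \<open>\<sigma>\<close>-invariant, so between the pairs \<open>{x, \<sigma> x}\<close> and \<open>{y, \<sigma> y}\<close> (\<open>x, y \<in> H\<^sup>-\<close>) it is a
  block \<open>[[a, b], [b, a]]\<close> with \<open>a \<ge> b\<close>. Call \<open>G\<close> dominating \<open>F\<close> if \<open>F \<le> G\<close> on \<open>H\<^sup>0\<close> and on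
  every pair both values of \<open>F\<close> are below the larger value of \<open>G\<close> and the sum of \<open>F\<close> is below
  that of \<open>G\<close>. This relation survives such kernel blocks and multiplication of a 0/1 function
  against its two-point rearrangement, so the rearranged non-coverage probabilities dominate
  the original ones; summing \<open>1 - \<cdot>\<close> over \<open>z\<close> reverses the inequality.\<close>

section \<open>The step distribution\<close>

definition axis_vec :: "'d::finite \<Rightarrow> int \<Rightarrow> int ^ 'd" where
  "axis_vec i c = (\<chi> j. if j = i then c else 0)"

lemma lazy_step_axis_vec:
  "(lazy_step :: (int ^ 'd::finite) pmf) = bernoulli_pmf (1/2) \<bind> (\<lambda>b. if b then return_pmf 0 else
      pmf_of_set UNIV \<bind> (\<lambda>i. pmf_of_set {1, -1::int} \<bind> (\<lambda>c. return_pmf (axis_vec i c))))"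
  unfolding lazy_step_def axis_vec_def ..

lemma l1dist_nonneg: "0 \<le> l1dist x y"
  unfolding l1dist_def by (intro sum_nonneg) auto

lemma l1dist_diff_zero: "l1dist (x - y) 0 = l1dist x y"
  unfolding l1dist_def by simp

lemma l1dist_zero_iff: "l1dist v 0 = 0 \<longleftrightarrow> v = 0"
  unfolding l1dist_def by (simp add: sum_nonneg_eq_0_iff vec_eq_iff)

lemma l1dist_axis_vec:
  assumes "\<bar>c\<bar> = 1"
  shows "l1dist (axis_vec i c) 0 = 1"
proof -
  have "(\<Sum>j\<in>UNIV. \<bar>axis_vec i c $ j\<bar>) = (\<Sum>j\<in>UNIV. if j = i then 1 else 0)"
    using assms by (intro sum.cong) (auto simp: axis_vec_def)
  then show ?thesis
    unfolding l1dist_def by simp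
qed

lemma l1dist_eq_1_imp_axis_vec:
  assumes "l1dist v 0 = 1"
  obtains i where "\<bar>v $ i\<bar> = 1" "v = axis_vec i (v $ i)"
proof -
  have norm: "(\<Sum>j\<in>UNIV. \<bar>v $ j\<bar>) = 1"
    using assms unfolding l1dist_def by simp
  then obtain i where "v $ i \<noteq> 0"
    by (metis (no_types, lifting) abs_zero sum.neutral zero_neq_one)
  have "(\<Sum>j\<in>UNIV. \<bar>v $ j\<bar>) = \<bar>v $ i\<bar> + (\<Sum>j\<in>UNIV - {i}. \<bar>v $ j\<bar>)"
    by (simp add: sum.remove)
  moreover have "0 \<le> (\<Sum>j\<in>UNIV - {i}. \<bar>v $ j\<bar>)"
    by (intro sum_nonneg) auto
  ultimately have vi: "\<bar>v $ i\<bar> = 1" and rest: "(\<Sum>j\<in>UNIV - {i}. \<bar>v $ j\<bar>) = 0"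
    using norm \<open>v $ i \<noteq> 0\<close> by linarith+
  from rest have "v = axis_vec i (v $ i)"
    by (auto simp: sum_nonneg_eq_0_iff axis_vec_def vec_eq_iff)
  with vi show thesis by (rule that)
qed

lemma axis_vec_eq_iff: "c \<noteq> 0 \<Longrightarrow> axis_vec i c = axis_vec j c' \<longleftrightarrow> i = j \<and> c = c'"
  by (auto simp: axis_vec_def vec_eq_iff split: if_splits)

lemma sum_indicator_axis_vec:
  "(\<Sum>i\<in>UNIV. \<Sum>c\<in>{1, -1::int}. indicator {axis_vec i c} v :: real) = (if l1dist v 0 = 1 then 1 else 0)"
proof (cases "l1dist v 0 = 1")
  case True
  then obtain i0 where i0: "\<bar>v $ i0\<bar> = 1" "v = axis_vec i0 (v $ i0)"
    by (rule l1dist_eq_1_imp_axis_vec)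
  have "indicator {axis_vec i c} v = (if i = i0 \<and> c = v $ i0 then 1 else 0 :: real)" for i c
    using axis_vec_eq_iff[of "v $ i0" i0 i c] i0 by (auto simp: indicator_def)
  then show ?thesis
    using True i0(1) by (auto simp: abs_if split: if_splits)
next
  case False
  then have "v \<noteq> axis_vec i c" if "c \<in> {1, -1}" for i c
    using l1dist_axis_vec[of c i] that by auto
  then show ?thesis
    using False by (auto intro!: sum.neutral)
qed

definition lazy_weight :: "nat \<Rightarrow> int \<Rightarrow> real" where
  "lazy_weight d n = (if n = 0 then 1/2 else if n = 1 then 1 / (4 * real d) else 0)"

lemma pmf_lazy_step:
  "pmf (lazy_step :: (int ^ 'd::finite) pmf) (x - y) = lazy_weight CARD('d) (l1dist x y)"
proof -
  let ?v = "x - y"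
  have signs: "pmf (pmf_of_set {1, -1::int} \<bind> (\<lambda>c. return_pmf (axis_vec i c))) ?v
      = (\<Sum>c\<in>{1, -1::int}. indicator {axis_vec i c} ?v) / 2" for i :: 'd
    by (subst pmf_bind, subst integral_pmf_of_set) (auto simp: indicator_def eq_commute)
  have moves: "pmf (pmf_of_set UNIV \<bind> (\<lambda>i. pmf_of_set {1, -1::int} \<bind> (\<lambda>c. return_pmf (axis_vec i c)))) ?v
      = (if l1dist ?v 0 = 1 then 1 else 0) / (2 * real CARD('d))"
    unfolding sum_indicator_axis_vec[symmetric]
    by (subst pmf_bind, subst integral_pmf_of_set) (auto simp: signs sum_divide_distrib)
  have "pmf lazy_step ?v = indicator {?v} 0 / 2 + (if l1dist ?v 0 = 1 then 1 else 0) / (4 * real CARD('d))"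
    unfolding lazy_step_axis_vec
    by (subst pmf_bind, subst integral_bernoulli_pmf) (simp_all add: moves)
  moreover have "?v = 0 \<longleftrightarrow> l1dist x y = 0"
    using l1dist_zero_iff[of ?v] by (simp add: l1dist_diff_zero)
  ultimately show ?thesis
    by (auto simp: lazy_weight_def l1dist_diff_zero indicator_def)
qed

lemma lazy_weight_antimono:
  assumes "1 \<le> d" "0 \<le> m" "m \<le> n"
  shows "lazy_weight d n \<le> lazy_weight d m"
proof -
  have "1 / (4 * real d) \<le> 1 / 2"
    using assms(1) by (simp add: field_simps)
  with assms show ?thesis
    by (auto simp: lazy_weight_def)
qed

section \<open>Non-coverage probabilities evaluated backwards in time\<close>

definition lazy_transition :: "(int ^ 'd::finite \<Rightarrow> ennreal) \<Rightarrow> int ^ 'd \<Rightarrow> ennreal" where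
  "lazy_transition h w = (\<integral>\<^sup>+ y. h (w - y) \<partial>measure_pmf lazy_step)"

definition lazy_kernel :: "int ^ 'd::finite \<Rightarrow> int ^ 'd \<Rightarrow> ennreal" where
  "lazy_kernel w y = ennreal (lazy_weight CARD('d) (l1dist w y))"

lemma lazy_transition_eq_kernel_sum:
  "lazy_transition h w = (\<integral>\<^sup>+ y. lazy_kernel w y * h y \<partial>count_space UNIV)"
proof -
  have "lazy_transition h w = (\<integral>\<^sup>+ v. ennreal (pmf lazy_step v) * h (w - v) \<partial>count_space UNIV)"
    unfolding lazy_transition_def nn_integral_measure_pmf ..
  also have "\<dots> = (\<integral>\<^sup>+ y. ennreal (pmf lazy_step (w - y)) * h (w - (w - y)) \<partial>count_space UNIV)"
    by (rule nn_integral_bij_count_space[symmetric]) (rule bij_betwI[where g = "\<lambda>y. w - y"]; auto)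
  finally show ?thesis
    by (simp add: lazy_kernel_def pmf_lazy_step)
qed

text \<open>Averaging the factor of the last time over the last increment and absorbing it into the
  factor of the time before removes one step of the walk.\<close>
primrec backward_prod :: "nat \<Rightarrow> (nat \<Rightarrow> int ^ 'd::finite \<Rightarrow> ennreal) \<Rightarrow> int ^ 'd \<Rightarrow> ennreal" where
  "backward_prod 0 f = f 0"
| "backward_prod (Suc n) f = backward_prod n (f(n := (\<lambda>w. f n w * lazy_transition (f (Suc n)) w)))"

lemma prod_atMost_eq_lessThan_times: "(\<Prod>s\<le>(n::nat). h s) = (\<Prod>s<n. h s) * (h n :: 'a::comm_monoid_mult)"
  by (simp add: lessThan_Suc_atMost[symmetric] mult.commute)

lemma nn_integral_lazy_walk_prod:
  fixes z :: "int ^ 'd::finite"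
  shows "(\<integral>\<^sup>+ X. (\<Prod>s\<le>n. f s (z - X s)) \<partial>measure_pmf (lazy_walk n)) = backward_prod n f z"
proof (induction n arbitrary: f)
  case 0
  then show ?case by simp
next
  case (Suc n)
  define f' where "f' = f(n := (\<lambda>w. f n w * lazy_transition (f (Suc n)) w))"
  have last_step: "(\<integral>\<^sup>+ y. (\<Prod>s\<le>Suc n. f s (z - (X(Suc n := X n + y)) s)) \<partial>measure_pmf lazy_step)
      = (\<Prod>s\<le>n. f' s (z - X s))" for X :: "nat \<Rightarrow> int ^ 'd"
  proof -
    have "(\<Prod>s\<le>n. f s (z - (X(Suc n := X n + y)) s)) = (\<Prod>s\<le>n. f s (z - X s))" for y
      by (intro prod.cong) auto
    then have "(\<integral>\<^sup>+ y. (\<Prod>s\<le>Suc n. f s (z - (X(Suc n := X n + y)) s)) \<partial>measure_pmf lazy_step)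
        = (\<integral>\<^sup>+ y. (\<Prod>s\<le>n. f s (z - X s)) * f (Suc n) ((z - X n) - y) \<partial>measure_pmf lazy_step)"
      by (simp add: prod_atMost_eq_lessThan_times[of _ "Suc n"] lessThan_Suc_atMost algebra_simps)
    also have "\<dots> = (\<Prod>s\<le>n. f s (z - X s)) * lazy_transition (f (Suc n)) (z - X n)"
      unfolding lazy_transition_def by (rule nn_integral_cmult) simp
    also have "\<dots> = (\<Prod>s\<le>n. f' s (z - X s))"
      by (simp add: prod_atMost_eq_lessThan_times f'_def mult.assoc)
    finally show ?thesis .
  qed
  have "(\<integral>\<^sup>+ X. (\<Prod>s\<le>Suc n. f s (z - X s)) \<partial>measure_pmf (lazy_walk (Suc n)))
      = (\<integral>\<^sup>+ X. (\<integral>\<^sup>+ y. (\<Prod>s\<le>Suc n. f s (z - (X(Suc n := X n + y)) s)) \<partial>measure_pmf lazy_step)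
          \<partial>measure_pmf (lazy_walk n))"
    by simp
  also have "\<dots> = (\<integral>\<^sup>+ X. (\<Prod>s\<le>n. f' s (z - X s)) \<partial>measure_pmf (lazy_walk n))"
    by (simp only: last_step)
  also have "\<dots> = backward_prod n f' z"
    by (rule Suc.IH)
  finally show ?case
    by (simp add: f'_def)
qed

lemma backward_prod_le_1:
  fixes z :: "int ^ 'd::finite"
  assumes "\<And>s w. f s w \<le> (1::ennreal)"
  shows "backward_prod n f z \<le> 1"
proof -
  have "backward_prod n f z \<le> (\<integral>\<^sup>+ X. 1 \<partial>measure_pmf (lazy_walk n :: (nat \<Rightarrow> int ^ 'd) pmf))"
    unfolding nn_integral_lazy_walk_prod[symmetric]
    by (intro nn_integral_mono prod_le_1) (simp add: assms)
  then show ?thesis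
    by simp
qed

lemma indicator_UN_eq_1_minus_prod:
  assumes "finite I"
  shows "indicator (\<Union>s\<in>I. C s) z = 1 - (\<Prod>s\<in>I. indicator (- C s) z :: ennreal)"
proof (cases "\<exists>s\<in>I. z \<in> C s")
  case True
  then obtain s where "s \<in> I" "z \<in> C s"
    by blast
  then have "(\<Prod>s\<in>I. indicator (- C s) z :: ennreal) = 0"
    using assms by (intro prod_zero) (auto intro!: bexI[of _ s])
  then show ?thesis
    unfolding \<open>(\<Prod>s\<in>I. indicator (- C s) z :: ennreal) = 0\<close> using True by simp
next
  case False
  then have "(\<Prod>s\<in>I. indicator (- C s) z :: ennreal) = 1"
    by (intro prod.neutral) auto
  then show ?thesis
    unfolding \<open>(\<Prod>s\<in>I. indicator (- C s) z :: ennreal) = 1\<close> using False by simp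
qed

lemma nn_integral_one_minus:
  assumes "\<And>x. h x \<le> (1::ennreal)"
  shows "(\<integral>\<^sup>+ x. (1 - h x) \<partial>measure_pmf M) = 1 - (\<integral>\<^sup>+ x. h x \<partial>measure_pmf M)"
proof -
  have "(\<integral>\<^sup>+ x. (1 - h x) \<partial>measure_pmf M) + (\<integral>\<^sup>+ x. h x \<partial>measure_pmf M)
      = (\<integral>\<^sup>+ x. (1 - h x) + h x \<partial>measure_pmf M)"
    by (rule nn_integral_add[symmetric]) simp_all
  also have "\<dots> = 1"
    using assms by (simp add: diff_add_cancel_ennreal)
  finally have sum: "(\<integral>\<^sup>+ x. (1 - h x) \<partial>measure_pmf M) + (\<integral>\<^sup>+ x. h x \<partial>measure_pmf M) = 1" .
  have "(\<integral>\<^sup>+ x. h x \<partial>measure_pmf M) \<le> (\<integral>\<^sup>+ x. 1 \<partial>measure_pmf M)"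
    using assms by (intro nn_integral_mono) auto
  then have "(\<integral>\<^sup>+ x. h x \<partial>measure_pmf M) \<noteq> top"
    by (auto simp: top_unique)
  then show ?thesis
    by (metis ennreal_add_diff_cancel_right sum)
qed

lemma expected_vol_translate_union:
  fixes A :: "nat \<Rightarrow> (int ^ 'd::finite) set"
  shows "(\<integral>\<^sup>+ X. vol (\<Union>s\<le>t. (\<lambda>y. X s + y) ` A s) \<partial>measure_pmf (lazy_walk t))
    = (\<integral>\<^sup>+ z. (1 - backward_prod t (\<lambda>s. indicator (- A s)) z) \<partial>count_space UNIV)"
proof -
  let ?f = "\<lambda>s. indicator (- A s) :: int ^ 'd \<Rightarrow> ennreal"
  have covered: "(\<integral>\<^sup>+ X. indicator (\<Union>s\<le>t. (\<lambda>y. X s + y) ` A s) z \<partial>measure_pmf (lazy_walk t))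
      = 1 - backward_prod t ?f z" for z
  proof -
    have shift: "(\<Prod>s\<le>t. indicator (- ((\<lambda>y. X s + y) ` A s)) z :: ennreal) = (\<Prod>s\<le>t. ?f s (z - X s))"
      for X :: "nat \<Rightarrow> int ^ 'd"
      by (intro prod.cong) (auto simp: indicator_def image_iff intro: bexI[where x = "z - X _"])
    have "(\<integral>\<^sup>+ X. indicator (\<Union>s\<le>t. (\<lambda>y. X s + y) ` A s) z \<partial>measure_pmf (lazy_walk t))
        = (\<integral>\<^sup>+ X. (1 - (\<Prod>s\<le>t. ?f s (z - X s))) \<partial>measure_pmf (lazy_walk t))"
      by (simp only: indicator_UN_eq_1_minus_prod[OF finite_atMost] shift)
    also have "\<dots> = 1 - (\<integral>\<^sup>+ X. (\<Prod>s\<le>t. ?f s (z - X s)) \<partial>measure_pmf (lazy_walk t))"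
      by (intro nn_integral_one_minus prod_le_1) (auto simp: indicator_def)
    also have "\<dots> = 1 - backward_prod t ?f z"
      using nn_integral_lazy_walk_prod[where f = ?f] by simp
    finally show ?thesis .
  qed
  have "(\<integral>\<^sup>+ X. vol (\<Union>s\<le>t. (\<lambda>y. X s + y) ` A s) \<partial>measure_pmf (lazy_walk t))
      = (\<integral>\<^sup>+ z. (\<integral>\<^sup>+ X. indicator (\<Union>s\<le>t. (\<lambda>y. X s + y) ` A s) z \<partial>measure_pmf (lazy_walk t)) \<partial>count_space UNIV)"
    unfolding vol_def nn_integral_indicator[symmetric, OF sets_UNIV]
    by (rule nn_integral_count_space_nn_integral) simp_all
  then show ?thesis
    by (simp only: covered)
qed

section \<open>Domination under reflections\<close>

definition pair_dominated :: "ennreal \<Rightarrow> ennreal \<Rightarrow> ennreal \<Rightarrow> ennreal \<Rightarrow> bool" where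
  "pair_dominated f1 f2 g1 g2 \<longleftrightarrow> f1 \<le> g1 \<and> f2 \<le> g1 \<and> f1 + f2 \<le> g1 + g2"

lemma pair_dominated_mix:
  fixes a b :: ennreal
  assumes "b \<le> a" and "pair_dominated f1 f2 g1 g2"
  shows "pair_dominated (a * f1 + b * f2) (b * f1 + a * f2) (a * g1 + b * g2) (b * g1 + a * g2)"
proof -
  obtain c where a: "a = b + c"
    using assms(1) le_iff_add by blast
  have f: "f1 \<le> g1" "f2 \<le> g1" "f1 + f2 \<le> g1 + g2"
    using assms(2) unfolding pair_dominated_def by auto
  have g: "a * g1 + b * g2 = c * g1 + b * (g1 + g2)"
    unfolding a by (simp add: algebra_simps)
  have "a * f1 + b * f2 = c * f1 + b * (f1 + f2)" "b * f1 + a * f2 = c * f2 + b * (f1 + f2)"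
    unfolding a by (simp_all add: algebra_simps)
  moreover have "c * f1 + b * (f1 + f2) \<le> c * g1 + b * (g1 + g2)"
    "c * f2 + b * (f1 + f2) \<le> c * g1 + b * (g1 + g2)"
    by (rule add_mono[OF mult_left_mono mult_left_mono]; use f in simp)+
  moreover have "(a * f1 + b * f2) + (b * f1 + a * f2) \<le> (a * g1 + b * g2) + (b * g1 + a * g2)"
  proof -
    have "(a * f1 + b * f2) + (b * f1 + a * f2) = (a + b) * (f1 + f2)"
      by (simp add: algebra_simps)
    also have "\<dots> \<le> (a + b) * (g1 + g2)"
      using f by (intro mult_left_mono) simp_all
    also have "\<dots> = (a * g1 + b * g2) + (b * g1 + a * g2)"
      by (simp add: algebra_simps)
    finally show ?thesis .
  qed
  ultimately show ?thesis
    unfolding pair_dominated_def g by simp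
qed

lemma pair_dominated_nn_integral_count_space:
  fixes f1 f2 g1 g2 :: "'a \<Rightarrow> ennreal"
  defines "M \<equiv> count_space UNIV"
  assumes "\<And>y. pair_dominated (f1 y) (f2 y) (g1 y) (g2 y)"
  shows "pair_dominated (\<integral>\<^sup>+ y. f1 y \<partial>M) (\<integral>\<^sup>+ y. f2 y \<partial>M) (\<integral>\<^sup>+ y. g1 y \<partial>M) (\<integral>\<^sup>+ y. g2 y \<partial>M)"
proof -
  have "(\<integral>\<^sup>+ y. f1 y \<partial>M) + (\<integral>\<^sup>+ y. f2 y \<partial>M) = (\<integral>\<^sup>+ y. f1 y + f2 y \<partial>M)"
    unfolding M_def by (rule nn_integral_add[symmetric]) simp_all
  also have "\<dots> \<le> (\<integral>\<^sup>+ y. g1 y + g2 y \<partial>M)"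
    using assms by (intro nn_integral_mono) (simp add: pair_dominated_def)
  also have "\<dots> = (\<integral>\<^sup>+ y. g1 y \<partial>M) + (\<integral>\<^sup>+ y. g2 y \<partial>M)"
    unfolding M_def by (rule nn_integral_add) simp_all
  finally show ?thesis
    using assms unfolding pair_dominated_def by (auto intro: nn_integral_mono)
qed

lemma pair_dominated_mult_indicator:
  assumes "c1 \<in> {0, 1}" "c2 \<in> {0, 1}" and "pair_dominated f1 f2 g1 g2"
  shows "pair_dominated (c1 * f1) (c2 * f2) (max c1 c2 * g1) (min c1 c2 * g2)"
  using assms by (auto simp: pair_dominated_def add_increasing2)

lemma pair_dominated_one_minus:
  assumes "pair_dominated f1 f2 g1 g2" "f1 \<le> 1" "f2 \<le> 1" "g1 \<le> 1" "g2 \<le> 1"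
  shows "(1 - g1) + (1 - g2) \<le> (1 - f1) + (1 - f2)"
proof -
  obtain a b c d where r: "f1 = ennreal a" "f2 = ennreal b" "g1 = ennreal c" "g2 = ennreal d"
    "0 \<le> a" "0 \<le> b" "0 \<le> c" "0 \<le> d"
    using assms(2-) by (metis ennreal_cases ennreal_one_neq_top top_unique)
  then have le: "a \<le> 1" "b \<le> 1" "c \<le> 1" "d \<le> 1" "a + b \<le> c + d"
    using assms unfolding pair_dominated_def by (simp_all add: ennreal_plus[symmetric] del: ennreal_plus)
  have one_minus: "1 - ennreal x = ennreal (1 - x)" if "0 \<le> x" for x
    using ennreal_minus[of x 1] that by simp
  have "(1 - g1) + (1 - g2) = ennreal ((1 - c) + (1 - d))"
    using le r by (simp add: one_minus ennreal_plus[symmetric] del: ennreal_plus)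
  also have "\<dots> \<le> ennreal ((1 - a) + (1 - b))"
    using le by (intro ennreal_leI) linarith
  also have "\<dots> = (1 - f1) + (1 - f2)"
    using le r by (simp add: one_minus ennreal_plus[symmetric] del: ennreal_plus)
  finally show ?thesis .
qed

locale reflection =
  fixes \<sigma> :: "int ^ 'd::finite \<Rightarrow> int ^ 'd" and H0 Hp Hm :: "(int ^ 'd) set"
  assumes l1dist_sigma: "l1dist (\<sigma> x) (\<sigma> y) = l1dist x y"
    and sigma_sigma [simp]: "\<sigma> (\<sigma> x) = x"
    and half_spaces_cover: "H0 \<union> Hp \<union> Hm = UNIV"
    and half_spaces_disjoint: "H0 \<inter> Hp = {}" "H0 \<inter> Hm = {}" "Hp \<inter> Hm = {}"
    and H0_iff: "x \<in> H0 \<longleftrightarrow> \<sigma> x = x"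
    and sigma_image_Hp: "\<sigma> ` Hp = Hm"
    and l1dist_lt_sigma_Hp: "x \<in> Hp \<Longrightarrow> y \<in> Hp \<Longrightarrow> l1dist x y < l1dist x (\<sigma> y)"

lemma is_reflection_imp_reflection:
  "is_reflection \<sigma> H0 Hp Hm \<Longrightarrow> reflection \<sigma> H0 Hp Hm"
  unfolding is_reflection_def reflection_def by (elim conjE) (intro conjI allI impI; assumption | blast)

context reflection
begin

lemma sigma_in_Hp_iff [simp]: "\<sigma> x \<in> Hp \<longleftrightarrow> x \<in> Hm"
  by (metis image_iff sigma_image_Hp sigma_sigma)

lemma half_space_cases:
  obtains "x \<in> H0" "x \<notin> Hp" "x \<notin> Hm" | "x \<in> Hp" "x \<notin> H0" "x \<notin> Hm" | "x \<in> Hm" "x \<notin> H0" "x \<notin> Hp"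
  using half_spaces_cover half_spaces_disjoint by blast

lemma l1dist_lt_sigma_Hm:
  assumes "x \<in> Hm" "y \<in> Hm"
  shows "l1dist x y < l1dist x (\<sigma> y)"
proof -
  have "l1dist (\<sigma> x) (\<sigma> y) < l1dist (\<sigma> x) (\<sigma> (\<sigma> y))"
    using assms by (intro l1dist_lt_sigma_Hp) simp_all
  then show ?thesis
    using l1dist_sigma[of x "\<sigma> y"] by (simp only: l1dist_sigma sigma_sigma)
qed

lemma lazy_kernel_sigma: "lazy_kernel (\<sigma> x) (\<sigma> y) = lazy_kernel x y"
  unfolding lazy_kernel_def l1dist_sigma ..

lemma lazy_kernel_sigma_left: "lazy_kernel (\<sigma> x) y = lazy_kernel x (\<sigma> y)"
  using lazy_kernel_sigma[of x "\<sigma> y"] by simp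

lemma lazy_kernel_sigma_le:
  assumes "x \<in> Hm" "y \<in> Hm"
  shows "lazy_kernel x (\<sigma> y) \<le> lazy_kernel x y"
  unfolding lazy_kernel_def
  using l1dist_lt_sigma_Hm[OF assms] l1dist_nonneg
  by (intro ennreal_leI lazy_weight_antimono) (auto simp: Suc_le_eq)

lemma nn_integral_fold_sigma:
  "(\<integral>\<^sup>+ y. h y \<partial>count_space UNIV)
    = (\<integral>\<^sup>+ y. indicator H0 y * h y + indicator Hm y * (h y + h (\<sigma> y)) \<partial>count_space UNIV)"
proof -
  have "(\<integral>\<^sup>+ y. indicator Hm y * h (\<sigma> y) \<partial>count_space UNIV)
      = (\<integral>\<^sup>+ y. indicator Hp (\<sigma> y) * h (\<sigma> y) \<partial>count_space UNIV)"
    by (intro nn_integral_cong) (simp add: indicator_def)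
  also have "\<dots> = (\<integral>\<^sup>+ y. indicator Hp y * h y \<partial>count_space UNIV)"
    by (rule nn_integral_bij_count_space) (rule bij_betwI[where g = \<sigma>]; simp)
  finally have Hp_to_Hm: "(\<integral>\<^sup>+ y. indicator Hp y * h y \<partial>count_space UNIV)
      = (\<integral>\<^sup>+ y. indicator Hm y * h (\<sigma> y) \<partial>count_space UNIV)" ..
  have "(\<integral>\<^sup>+ y. h y \<partial>count_space UNIV)
      = (\<integral>\<^sup>+ y. (indicator H0 y * h y + indicator Hm y * h y) + indicator Hp y * h y \<partial>count_space UNIV)"
  proof (intro nn_integral_cong)
    fix y
    show "h y = (indicator H0 y * h y + indicator Hm y * h y) + indicator Hp y * h y"
      by (cases rule: half_space_cases[of y]) simp_all
  qed
  also have "\<dots> = (\<integral>\<^sup>+ y. indicator H0 y * h y + indicator Hm y * h y \<partial>count_space UNIV)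
      + (\<integral>\<^sup>+ y. indicator Hm y * h (\<sigma> y) \<partial>count_space UNIV)"
    by (subst nn_integral_add) (simp_all add: Hp_to_Hm)
  also have "\<dots> = (\<integral>\<^sup>+ y. indicator H0 y * h y + indicator Hm y * (h y + h (\<sigma> y)) \<partial>count_space UNIV)"
    by (subst nn_integral_add[symmetric]) (simp_all add: distrib_left add.assoc)
  finally show ?thesis .
qed

definition dominated :: "(int ^ 'd \<Rightarrow> ennreal) \<Rightarrow> (int ^ 'd \<Rightarrow> ennreal) \<Rightarrow> bool" where
  "dominated F G \<longleftrightarrow> (\<forall>z\<in>H0. F z \<le> G z) \<and>
     (\<forall>x\<in>Hm. pair_dominated (F x) (F (\<sigma> x)) (G x) (G (\<sigma> x)))"

text \<open>\<open>c\<close> stands for the indicator of the complement of a set, so its two-point rearrangement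
  carries the larger value on \<open>Hm\<close>.\<close>
definition rearranged :: "(int ^ 'd \<Rightarrow> ennreal) \<Rightarrow> (int ^ 'd \<Rightarrow> ennreal) \<Rightarrow> bool" where
  "rearranged c c' \<longleftrightarrow> (\<forall>z. c z \<in> {0, 1}) \<and> (\<forall>z\<in>H0. c' z = c z) \<and>
     (\<forall>x\<in>Hm. c' x = max (c x) (c (\<sigma> x)) \<and> c' (\<sigma> x) = min (c x) (c (\<sigma> x)))"

lemma rearranged_indicator_two_point:
  "rearranged (indicator (- B)) (indicator (- two_point \<sigma> H0 Hp Hm B))"
proof -
  have reflected: "y \<in> \<sigma> ` B \<longleftrightarrow> \<sigma> y \<in> B" for y
    by (metis image_iff sigma_sigma)
  have "z \<in> two_point \<sigma> H0 Hp Hm B \<longleftrightarrow> z \<in> B" if "z \<in> H0" for z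
    using that by (cases rule: half_space_cases[of z]) (auto simp: two_point_def)
  moreover have "x \<in> two_point \<sigma> H0 Hp Hm B \<longleftrightarrow> x \<in> B \<and> \<sigma> x \<in> B"
    and "\<sigma> x \<in> two_point \<sigma> H0 Hp Hm B \<longleftrightarrow> x \<in> B \<or> \<sigma> x \<in> B" if "x \<in> Hm" for x
    using that by (cases rule: half_space_cases[of x]; auto simp: two_point_def reflected)+
  ultimately show ?thesis
    unfolding rearranged_def by (auto simp: indicator_def)
qed

lemma dominated_mult_rearranged:
  assumes "rearranged c c'" and "dominated F G"
  shows "dominated (\<lambda>w. c w * F w) (\<lambda>w. c' w * G w)"
  using assms pair_dominated_mult_indicator
  unfolding dominated_def rearranged_def by (auto intro: mult_left_mono)

lemma rearranged_dominated:
  assumes "rearranged c c'"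
  shows "dominated c c'"
proof -
  have "dominated (\<lambda>_. 1) (\<lambda>_. 1)"
    by (simp add: dominated_def pair_dominated_def)
  from dominated_mult_rearranged[OF assms this] show ?thesis
    by simp
qed

lemma lazy_transition_fold_sigma:
  "lazy_transition h w = (\<integral>\<^sup>+ y. indicator H0 y * (lazy_kernel w y * h y)
     + indicator Hm y * (lazy_kernel w y * h y + lazy_kernel w (\<sigma> y) * h (\<sigma> y)) \<partial>count_space UNIV)"
  unfolding lazy_transition_eq_kernel_sum by (rule nn_integral_fold_sigma)

lemma fold_integrand_mono:
  fixes a b c d :: ennreal
  assumes "y \<in> H0 \<Longrightarrow> a \<le> c" and "y \<in> Hm \<Longrightarrow> b \<le> d"
  shows "indicator H0 y * a + indicator Hm y * b \<le> indicator H0 y * c + indicator Hm y * d"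
  using assms by (cases rule: half_space_cases[of y]) simp_all

lemma pair_dominated_fold_integrand:
  assumes "y \<in> H0 \<Longrightarrow> pair_dominated a1 a2 c1 c2" and "y \<in> Hm \<Longrightarrow> pair_dominated b1 b2 d1 d2"
  shows "pair_dominated (indicator H0 y * a1 + indicator Hm y * b1) (indicator H0 y * a2 + indicator Hm y * b2)
    (indicator H0 y * c1 + indicator Hm y * d1) (indicator H0 y * c2 + indicator Hm y * d2)"
  using assms by (cases rule: half_space_cases[of y]) (simp_all add: pair_dominated_def)

lemma dominated_lazy_transition:
  assumes "dominated F G"
  shows "dominated (lazy_transition F) (lazy_transition G)"
proof -
  have F_H0: "F y \<le> G y" if "y \<in> H0" for y
    using assms that unfolding dominated_def by blast
  have F_Hm: "pair_dominated (F y) (F (\<sigma> y)) (G y) (G (\<sigma> y))" if "y \<in> Hm" for y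
    using assms that unfolding dominated_def by blast
  have "lazy_transition F z \<le> lazy_transition G z" if z: "z \<in> H0" for z
  proof -
    have "lazy_kernel z (\<sigma> y) = lazy_kernel z y" for y
      using lazy_kernel_sigma_left[of z y] z by (simp add: H0_iff)
    then have "lazy_kernel z y * F y + lazy_kernel z (\<sigma> y) * F (\<sigma> y)
        \<le> lazy_kernel z y * G y + lazy_kernel z (\<sigma> y) * G (\<sigma> y)" if "y \<in> Hm" for y
      using F_Hm[OF that] by (simp add: distrib_left[symmetric] mult_left_mono pair_dominated_def)
    then show ?thesis
      unfolding lazy_transition_fold_sigma
      by (intro nn_integral_mono fold_integrand_mono mult_left_mono F_H0) simp_all
  qed
  moreover have "pair_dominated (lazy_transition F x) (lazy_transition F (\<sigma> x))
      (lazy_transition G x) (lazy_transition G (\<sigma> x))" if x: "x \<in> Hm" for x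
  proof -
    have "pair_dominated (lazy_kernel x y * F y) (lazy_kernel (\<sigma> x) y * F y)
        (lazy_kernel x y * G y) (lazy_kernel (\<sigma> x) y * G y)" if "y \<in> H0" for y
    proof -
      have "lazy_kernel (\<sigma> x) y = lazy_kernel x y"
        using lazy_kernel_sigma_left[of x y] that by (simp add: H0_iff)
      then show ?thesis
        using F_H0[OF that] by (simp add: pair_dominated_def add_mono mult_left_mono)
    qed
    moreover have "pair_dominated
        (lazy_kernel x y * F y + lazy_kernel x (\<sigma> y) * F (\<sigma> y))
        (lazy_kernel (\<sigma> x) y * F y + lazy_kernel (\<sigma> x) (\<sigma> y) * F (\<sigma> y))
        (lazy_kernel x y * G y + lazy_kernel x (\<sigma> y) * G (\<sigma> y))
        (lazy_kernel (\<sigma> x) y * G y + lazy_kernel (\<sigma> x) (\<sigma> y) * G (\<sigma> y))" if "y \<in> Hm" for y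
      using pair_dominated_mix[OF lazy_kernel_sigma_le[OF x that] F_Hm[OF that]]
      by (simp add: lazy_kernel_sigma_left lazy_kernel_sigma)
    ultimately show ?thesis
      unfolding lazy_transition_fold_sigma
      by (intro pair_dominated_nn_integral_count_space pair_dominated_fold_integrand)
  qed
  ultimately show ?thesis
    unfolding dominated_def by blast
qed

lemma dominated_backward_prod:
  assumes "\<And>s. s < n \<Longrightarrow> rearranged (f s) (g s)" and "dominated (f n) (g n)"
  shows "dominated (backward_prod n f) (backward_prod n g)"
  using assms
proof (induction n arbitrary: f g)
  case 0
  then show ?case by simp
next
  case (Suc n)
  have "dominated (\<lambda>w. f n w * lazy_transition (f (Suc n)) w) (\<lambda>w. g n w * lazy_transition (g (Suc n)) w)"
    using Suc.prems by (intro dominated_mult_rearranged dominated_lazy_transition) simp_all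
  then show ?case
    using Suc.prems(1) by (simp add: Suc.IH)
qed

lemma nn_integral_one_minus_dominated:
  assumes "dominated F G" and "\<And>z. F z \<le> 1" and "\<And>z. G z \<le> 1"
  shows "(\<integral>\<^sup>+ z. (1 - G z) \<partial>count_space UNIV) \<le> (\<integral>\<^sup>+ z. (1 - F z) \<partial>count_space UNIV)"
  unfolding nn_integral_fold_sigma[of "\<lambda>z. 1 - G z"] nn_integral_fold_sigma[of "\<lambda>z. 1 - F z"]
proof (intro nn_integral_mono fold_integrand_mono)
  fix y
  show "1 - G y \<le> 1 - F y" if "y \<in> H0"
    using assms(1) that unfolding dominated_def by (simp add: ennreal_minus_mono)
  show "1 - G y + (1 - G (\<sigma> y)) \<le> 1 - F y + (1 - F (\<sigma> y))" if "y \<in> Hm"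
    using assms that unfolding dominated_def by (intro pair_dominated_one_minus) auto
qed

end

theorem lemma3p3:
  fixes D :: "nat \<Rightarrow> (int ^ 'd::finite) set"
    and \<sigma> :: "int ^ 'd \<Rightarrow> int ^ 'd"
    and H0 Hp Hm :: "(int ^ 'd) set"
    and t :: nat
  assumes "\<And>s. uminus ` D s = D s"
    and "is_reflection \<sigma> H0 Hp Hm"
  shows "(\<integral>\<^sup>+ X. vol (\<Union>s\<le>t. (\<lambda>y. X s + y) ` D s) \<partial>measure_pmf (lazy_walk t))
       \<ge> (\<integral>\<^sup>+ X. vol (\<Union>s\<le>t. (\<lambda>y. X s + y) ` two_point \<sigma> H0 Hp Hm (D s)) \<partial>measure_pmf (lazy_walk t))"
proof -
  interpret reflection \<sigma> H0 Hp Hm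
    by (rule is_reflection_imp_reflection) (fact assms(2))
  let ?f = "\<lambda>s. indicator (- D s) :: int ^ 'd \<Rightarrow> ennreal"
  let ?g = "\<lambda>s. indicator (- two_point \<sigma> H0 Hp Hm (D s)) :: int ^ 'd \<Rightarrow> ennreal"
  have "rearranged (?f s) (?g s)" for s
    by (rule rearranged_indicator_two_point)
  then have "dominated (backward_prod t ?f) (backward_prod t ?g)"
    by (intro dominated_backward_prod rearranged_dominated)
  then show ?thesis
    unfolding expected_vol_translate_union
    by (intro nn_integral_one_minus_dominated backward_prod_le_1) (simp_all add: indicator_def)
qed

end
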